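(* Let $D$ be a subsemigroup of $(\mathbb N_0,+)$. (a) $h\notin\mathcal I_D$ if and only if $0\in D$. (b) $\{w\mid w\text{ bracket pattern},\ \mathrm{Br}_\bullet(w)\in\mathcal I_D\}=\mathfrak W_{D\cup\{0\}}$.
   Context: $\mathbb N=\{1,2,\dots\}$, $\mathbb N_0=\mathbb N\cup\{0\}$. A (two-colored) partition $p$ consists of two finite totally ordered sets $U$ (upper row, left to right) and $L$ (lower row), a decomposition of $U\sqcup L$ (the points) into non-empty pairwise disjoint blocks, and a coloring of each point by $\circ$ or $\bullet$. A pair partition has only two-point blocks. On the points of $p$ consider the cyclic order obtained by traversing the lower row left to right and then the upper row right to left. $]\alpha,\beta[$: points strictly after $\alpha$ and before $\beta$ in this cyclic order; $]\alpha,\beta]:=]\alpha,\beta[\cup\{\beta\}$ for $\alpha\ne\beta$, $]\alpha,\alpha]:=\emptyset$. Normalized color: the color for lower points, the opposite color for upper points. $\sigma_p(S)$ = #normalized-$\circ$ points of $S$ $-$ #normalized-$\bullet$ points of $S$. Distinct blocks $B,B'$ cross if there are $\alpha,\beta\in B,\gamma,\delta\in B'$ in cyclic order $\alpha,\gamma,\beta,\delta$. $\mathcal P^{\circ\bullet}_{2,\mathrm{nb}}$: pair partitions each block of which has one point of each normalized color. $\mathcal S_0$: those $p\in\mathcal P^{\circ\bullet}_{2,\mathrm{nb}}$ with $\sigma_p(]\alpha,\beta[)=0$ for all blocks $\{\alpha,\beta\}$. For $p\in\mathcal S_0$: $\delta_p(\alpha,\beta)=\sigma_p(]\alpha,\beta[)$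 for different normalized colors, $\sigma_p(]\alpha,\beta])$ for equal ones; $d_p(B,B')=|\delta_p(\alpha,\alpha')|$ for any $\alpha\in B,\alpha'\in B'$ (well defined). A subsemigroup of $(\mathbb N_0,+)$ is a possibly empty subset closed under addition. $\mathcal I_D$: all $p\in\mathcal S_0$ with $d_p(B,B')\notin D$ for all crossing blocks $B,B'$. $h$ is the partition with upper row $\circ\bullet\circ$ and lower row $\circ\bullet\circ$ whose blocks are $\{$1st lower, 3rd upper$\}$, $\{$2nd lower, 2nd upper$\}$, $\{$3rd lower, 1st upper$\}$. A bracket pattern is a non-empty finite subset $w\subseteq\mathbb N$; $\|w\|:=\max(w)$. Its completion is $A(w):=\{j-i\mid j\in w,\ i\in\mathbb N_0,\ i\notin w,\ i<j\}$. For a submonoid $M$ of $(\mathbb N_0,+)$, $\mathfrak W_M:=\{w\mid w\text{ bracket pattern},\ A(w)\subseteq\mathbb N_0\setminus M\}$. For a bracket pattern $w$ with $m=\|w\|$, $\mathrm{Br}_\bullet(w)$ is the partition whose lower row, left to right, is $b_m,\dots,b_1,b_0,c_0,c_1,\dots,c_m$ and upper row $b'_m,\dots,b'_0,c'_0,\dots,c'_m$, all $b_k,b'_k$ black and all $c_k,c'_k$ white, with blocks $\{b_k,c_k\},\{b'_k,c'_k\}$ for $k\in w$ and $\{b_k,b'_k\},\{c_k,c'_k\}$ for $0\le k\le m$, $k\notin w$. *)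

theory Defs
  imports Main
begin

text \<open>Points: (False, i) is the i-th lower point (0-based, left to right),
  (True, i) is the i-th upper point (0-based, left to right).
  Colours: True = white (circ), False = black (bullet).\<close>

type_synonym pt = "bool \<times> nat"

record part =
  up :: nat
  low :: nat
  blocks :: "pt set set"
  col :: "pt \<Rightarrow> bool"

definition pts :: "part \<Rightarrow> pt set" where
  "pts p = {(False, i) | i. i < low p} \<union> {(True, i) | i. i < up p}"

text \<open>Position in the cyclic order: lower row left to right, then upper row right to left.\<close>
definition pos :: "part \<Rightarrow> pt \<Rightarrow> nat" where
  "pos p x = (if fst x then low p + up p - 1 - snd x else snd x)"

definition oint :: "part \<Rightarrow> pt \<Rightarrow> pt \<Rightarrow> pt set" where
  "oint p a b = {g \<in> pts p.
     if pos p a < pos p b then pos p a < pos p g \<and> pos p g < pos p b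
     else if pos p b < pos p a then pos p a < pos p g \<or> pos p g < pos p b
     else pos p g \<noteq> pos p a}"

definition cint :: "part \<Rightarrow> pt \<Rightarrow> pt \<Rightarrow> pt set" where
  "cint p a b = (if a = b then {} else oint p a b \<union> {b})"

definition ncol :: "part \<Rightarrow> pt \<Rightarrow> bool" where
  "ncol p x = (if fst x then \<not> col p x else col p x)"

definition sigma :: "part \<Rightarrow> pt set \<Rightarrow> int" where
  "sigma p S = int (card {x \<in> S. ncol p x}) - int (card {x \<in> S. \<not> ncol p x})"

definition is_partition :: "part \<Rightarrow> bool" where
  "is_partition p \<longleftrightarrow>
     (\<forall>B \<in> blocks p. B \<noteq> {} \<and> B \<subseteq> pts p) \<and> \<Union>(blocks p) = pts p \<and>
     (\<forall>B \<in> blocks p. \<forall>B' \<in> blocks p. B \<noteq> B' \<longrightarrow> B \<inter> B' = {})"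

definition P2nb :: "part \<Rightarrow> bool" where
  "P2nb p \<longleftrightarrow> is_partition p \<and>
     (\<forall>B \<in> blocks p. \<exists>a b. B = {a, b} \<and> a \<noteq> b \<and> ncol p a \<noteq> ncol p b)"

definition S0 :: "part \<Rightarrow> bool" where
  "S0 p \<longleftrightarrow> P2nb p \<and>
     (\<forall>B \<in> blocks p. \<forall>a \<in> B. \<forall>b \<in> B. a \<noteq> b \<longrightarrow> sigma p (oint p a b) = 0)"

definition delta :: "part \<Rightarrow> pt \<Rightarrow> pt \<Rightarrow> int" where
  "delta p a b = (if ncol p a \<noteq> ncol p b then sigma p (oint p a b) else sigma p (cint p a b))"

definition dd :: "part \<Rightarrow> pt set \<Rightarrow> pt set \<Rightarrow> nat" where
  "dd p B B' = nat \<bar>delta p (SOME a. a \<in> B) (SOME b. b \<in> B')\<bar>"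

definition crosses :: "part \<Rightarrow> pt set \<Rightarrow> pt set \<Rightarrow> bool" where
  "crosses p B B' \<longleftrightarrow> B \<noteq> B' \<and>
     (\<exists>a \<in> B. \<exists>b \<in> B. \<exists>g \<in> B'. \<exists>d \<in> B'. a \<noteq> b \<and> g \<in> oint p a b \<and> d \<in> oint p b a)"

definition ID :: "nat set \<Rightarrow> part set" where
  "ID D = {p. S0 p \<and> (\<forall>B \<in> blocks p. \<forall>B' \<in> blocks p. crosses p B B' \<longrightarrow> dd p B B' \<notin> D)}"

definition subsemigroup :: "nat set \<Rightarrow> bool" where
  "subsemigroup D \<longleftrightarrow> (\<forall>x \<in> D. \<forall>y \<in> D. x + y \<in> D)"

definition hpart :: part where
  "hpart = \<lparr> up = 3, low = 3,
     blocks = {{(False, 0), (True, 2)}, {(False, 1), (True, 1)}, {(False, 2), (True, 0)}},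
     col = (\<lambda>x. snd x \<noteq> 1) \<rparr>"

definition bracket_pattern :: "nat set \<Rightarrow> bool" where
  "bracket_pattern w \<longleftrightarrow> finite w \<and> w \<noteq> {} \<and> 0 \<notin> w"

definition completion :: "nat set \<Rightarrow> nat set" where
  "completion w = {j - i | j i. j \<in> w \<and> i \<notin> w \<and> i < j}"

definition WM :: "nat set \<Rightarrow> nat set set" where
  "WM M = {w. bracket_pattern w \<and> completion w \<subseteq> - M}"

text \<open>Br_bullet(w), m = max w: each row is b_m..b_0 c_0..c_m, i.e. b_k at index m-k,
  c_k at index m+1+k; b black, c white.\<close>
definition Br :: "nat set \<Rightarrow> part" where
  "Br w = (let m = Max w;
              bl = (\<lambda>r k. (r, m - k)); cl = (\<lambda>r k. (r, m + 1 + k)) in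
     \<lparr> up = 2 * (m + 1), low = 2 * (m + 1),
       blocks = {{bl False k, cl False k} | k. k \<in> w} \<union> {{bl True k, cl True k} | k. k \<in> w}
              \<union> {{bl False k, bl True k} | k. k \<le> m \<and> k \<notin> w}
              \<union> {{cl False k, cl True k} | k. k \<le> m \<and> k \<notin> w},
       col = (\<lambda>x. m + 1 \<le> snd x) \<rparr>)"

end

(* Read the points in cyclic order as positions 0, ..., n-1 and let the height H(q) be sigma of
   the first q of them. Then sigma of a cyclic interval is a difference of heights, and when
   H(n) = 0 the quantity delta(alpha, beta) is the height just before beta (just after it, if the
   normalized colours agree) minus the height just after alpha.
   In h the normalized colours alternate, so H only takes the values 0 and 1 and every d_h vanishes;
   as h has crossing blocks, h is excluded from I_D exactly when 0 is in D.
   In Br(w), with m = max w, the height at a point of index k is k - m up to a colour shift, so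
   blocks at levels k and j have distance |k - j|. Two blocks cross exactly when one is a bracket of
   a level k in w and the other a through-string of a level j < k not in w; hence the distances of
   crossing blocks form the completion A(w), which never contains 0. Neither part needs D to be
   closed under addition. *)
theory Submission
  imports Defs
begin

definition npts :: "part \<Rightarrow> nat" where
  "npts p = low p + up p"

definition pt_at :: "part \<Rightarrow> nat \<Rightarrow> pt" where
  "pt_at p q = (if q < low p then (False, q) else (True, low p + up p - 1 - q))"

lemma pos_less_npts: "x \<in> pts p \<Longrightarrow> pos p x < npts p"
  by (auto simp: pts_def pos_def npts_def)

lemma pt_at_pos: "x \<in> pts p \<Longrightarrow> pt_at p (pos p x) = x"
  by (auto simp: pts_def pos_def pt_at_def)

lemma pos_pt_at: "q < npts p \<Longrightarrow> pos p (pt_at p q) = q"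
  by (auto simp: npts_def pos_def pt_at_def)

lemma pt_at_in_pts: "q < npts p \<Longrightarrow> pt_at p q \<in> pts p"
  by (auto simp: npts_def pts_def pt_at_def)

lemma pt_at_eq_iff: "q < npts p \<Longrightarrow> r < npts p \<Longrightarrow> pt_at p q = pt_at p r \<longleftrightarrow> q = r"
  by (metis pos_pt_at)

lemma inj_on_pt_at: "inj_on (pt_at p) {..<npts p}"
  by (simp add: inj_on_def pt_at_eq_iff)

lemma pts_eq_image_pt_at: "pts p = pt_at p ` {..<npts p}"
  using pt_at_pos pos_less_npts by (force simp: image_iff pt_at_in_pts)

lemma finite_pts: "finite (pts p)"
  by (simp add: pts_eq_image_pt_at)

definition cyc_between :: "nat \<Rightarrow> nat \<Rightarrow> nat \<Rightarrow> bool" where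
  "cyc_between a b g \<longleftrightarrow>
     (if a < b then a < g \<and> g < b else if b < a then a < g \<or> g < b else g \<noteq> a)"

lemma oint_eq_image:
  "oint p a b = pt_at p ` {q. q < npts p \<and> cyc_between (pos p a) (pos p b) q}"
  unfolding oint_def cyc_between_def[symmetric]
  by (auto simp: pt_at_in_pts pos_pt_at pos_less_npts pt_at_pos intro!: image_eqI[where x="pos p _"])

lemma pt_at_in_oint_iff:
  "s < npts p \<Longrightarrow> t < npts p \<Longrightarrow> q < npts p \<Longrightarrow>
    pt_at p q \<in> oint p (pt_at p s) (pt_at p t) \<longleftrightarrow> cyc_between s t q"
  by (simp add: oint_def cyc_between_def pt_at_in_pts pos_pt_at)

definition sgn_at :: "part \<Rightarrow> nat \<Rightarrow> int" where
  "sgn_at p q = (if ncol p (pt_at p q) then 1 else -1)"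

definition height :: "part \<Rightarrow> nat \<Rightarrow> int" where
  "height p q = (\<Sum>r<q. sgn_at p r)"

lemma height_0 [simp]: "height p 0 = 0"
  by (simp add: height_def)

lemma height_Suc: "height p (Suc q) = height p q + sgn_at p q"
  by (simp add: height_def)

lemma sigma_eq_sum: "finite S \<Longrightarrow> sigma p S = (\<Sum>x\<in>S. if ncol p x then 1 else -1)"
  by (simp add: sigma_def sum.If_cases Int_def)

lemma sigma_image_pt_at:
  assumes "Q \<subseteq> {..<npts p}"
  shows "sigma p (pt_at p ` Q) = (\<Sum>q\<in>Q. sgn_at p q)"
proof -
  have "finite Q" using assms finite_subset by blast
  moreover have "inj_on (pt_at p) Q" using inj_on_pt_at assms by (rule inj_on_subset)
  ultimately show ?thesis by (simp add: sigma_eq_sum sum.reindex sgn_at_def)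
qed

lemma sum_sgn_at_atLeastLessThan:
  "a \<le> b \<Longrightarrow> (\<Sum>q\<in>{a..<b}. sgn_at p q) = height p b - height p a"
  using sum.atLeastLessThan_concat[of 0 a b "sgn_at p"]
  by (simp add: height_def atLeast0LessThan)

lemma sigma_oint_pt_at:
  assumes "s < npts p" "t < npts p" "s \<noteq> t"
  shows "sigma p (oint p (pt_at p s) (pt_at p t)) =
    height p t - height p (Suc s) + (if t < s then height p (npts p) else 0)"
proof (cases "s < t")
  case True
  then have "{q. q < npts p \<and> cyc_between s t q} = {Suc s..<t}"
    using assms by (auto simp: cyc_between_def)
  moreover have "{Suc s..<t} \<subseteq> {..<npts p}" using assms by auto
  ultimately show ?thesis using True assms
    by (simp add: oint_eq_image pos_pt_at sigma_image_pt_at sum_sgn_at_atLeastLessThan)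
next
  case False
  then have "{q. q < npts p \<and> cyc_between s t q} = {Suc s..<npts p} \<union> {0..<t}"
    using assms by (auto simp: cyc_between_def)
  moreover have "(\<Sum>q\<in>{Suc s..<npts p} \<union> {0..<t}. sgn_at p q) =
      (\<Sum>q\<in>{Suc s..<npts p}. sgn_at p q) + (\<Sum>q\<in>{0..<t}. sgn_at p q)"
    using False by (intro sum.union_disjoint) auto
  moreover have "{Suc s..<npts p} \<union> {0..<t} \<subseteq> {..<npts p}" using assms by auto
  ultimately show ?thesis
    using False assms
    by (simp add: oint_eq_image pos_pt_at sigma_image_pt_at sum_sgn_at_atLeastLessThan)
qed

lemma delta_self: "delta p a a = 0"
  by (simp add: delta_def cint_def sigma_def)

lemma delta_pt_at:
  assumes "s < npts p" "t < npts p" and total: "height p (npts p) = 0"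
  shows "delta p (pt_at p s) (pt_at p t) =
    height p (if ncol p (pt_at p s) = ncol p (pt_at p t) then Suc t else t) - height p (Suc s)"
proof (cases "s = t")
  case True
  then show ?thesis by (simp add: delta_self)
next
  case False
  have "cint p (pt_at p s) (pt_at p t) = insert (pt_at p t) (oint p (pt_at p s) (pt_at p t))"
    using False assms by (simp add: cint_def pt_at_eq_iff)
  moreover have "pt_at p t \<notin> oint p (pt_at p s) (pt_at p t)"
    by (auto simp: oint_def cyc_between_def)
  moreover have "finite (oint p (pt_at p s) (pt_at p t))"
    using finite_pts by (simp add: oint_def)
  ultimately show ?thesis
    using sigma_oint_pt_at[OF assms(1,2) False] total
    by (simp add: delta_def sigma_eq_sum height_Suc sgn_at_def)
qed

definition chord :: "part \<Rightarrow> nat \<Rightarrow> nat \<Rightarrow> pt set" where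
  "chord p x y = {pt_at p x, pt_at p y}"

definition interleave :: "nat \<Rightarrow> nat \<Rightarrow> nat \<Rightarrow> nat \<Rightarrow> bool" where
  "interleave x y u v \<longleftrightarrow> x < u \<and> u < y \<and> y < v \<or> u < x \<and> x < v \<and> v < y"

lemma crosses_chord_iff:
  assumes "x < y" "y < npts p" "u < v" "v < npts p"
  shows "crosses p (chord p x y) (chord p u v) \<longleftrightarrow> interleave x y u v"
  using assms
  by (simp add: crosses_def chord_def interleave_def doubleton_eq_iff pt_at_eq_iff
      pt_at_in_oint_iff cyc_between_def) linarith

lemma dd_obtain:
  assumes "B \<noteq> {}" "B' \<noteq> {}"
  obtains a b where "a \<in> B" "b \<in> B'" "dd p B B' = nat \<bar>delta p a b\<bar>"
  using assms by (metis dd_def some_in_eq)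

lemma S0_chordsI:
  assumes "is_partition p"
    and "\<And>B. B \<in> blocks p \<Longrightarrow> \<exists>x y. x < y \<and> y < npts p \<and> B = chord p x y \<and>
           ncol p (pt_at p x) \<noteq> ncol p (pt_at p y) \<and>
           delta p (pt_at p x) (pt_at p y) = 0 \<and> delta p (pt_at p y) (pt_at p x) = 0"
  shows "S0 p"
  unfolding S0_def P2nb_def
proof (intro conjI assms(1) ballI allI impI)
  fix B assume "B \<in> blocks p"
  then obtain x y where xy: "x < y" "y < npts p" "B = chord p x y"
    and ncol: "ncol p (pt_at p x) \<noteq> ncol p (pt_at p y)"
    and delta: "delta p (pt_at p x) (pt_at p y) = 0" "delta p (pt_at p y) (pt_at p x) = 0"
    using assms(2) by blast
  have ne: "pt_at p x \<noteq> pt_at p y" using xy by (simp add: pt_at_eq_iff)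
  then show "\<exists>a b. B = {a, b} \<and> a \<noteq> b \<and> ncol p a \<noteq> ncol p b"
    using xy(3) ncol unfolding chord_def by blast
  fix a b assume "a \<in> B" "b \<in> B" "a \<noteq> b"
  then show "sigma p (oint p a b) = 0"
    using xy ncol delta by (auto simp: chord_def delta_def)
qed

lemma npts_hpart [simp]: "npts hpart = 6"
  by (simp add: npts_def hpart_def)

lemma pt_at_hpart: "pt_at hpart q = (if q < 3 then (False, q) else (True, 5 - q))"
  by (simp add: pt_at_def hpart_def)

lemma ncol_hpart: "q < 6 \<Longrightarrow> ncol hpart (pt_at hpart q) \<longleftrightarrow> even q"
  unfolding pt_at_hpart ncol_def by (simp add: hpart_def) presburger

lemma height_hpart: "q \<le> 6 \<Longrightarrow> height hpart q = (if even q then 0 else 1)"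
  by (induction q) (simp_all add: height_Suc sgn_at_def ncol_hpart)

lemma delta_hpart:
  assumes "a \<in> pts hpart" "b \<in> pts hpart"
  shows "delta hpart a b = 0"
proof -
  obtain s t where "s < 6" "t < 6" "a = pt_at hpart s" "b = pt_at hpart t"
    using assms by (auto simp: pts_eq_image_pt_at)
  then show ?thesis
    by (simp add: delta_pt_at height_hpart ncol_hpart)
qed

lemma blocks_hpart: "blocks hpart = (\<lambda>x. chord hpart x (x + 3)) ` {0, 1, 2}"
  unfolding image_insert image_empty chord_def pt_at_hpart by (simp add: hpart_def insert_commute)

lemma pts_hpart: "pts hpart = {(False, 0), (False, 1), (False, 2), (True, 0), (True, 1), (True, 2)}"
  by (auto simp: pts_def hpart_def less_Suc_eq numeral_3_eq_3)

lemma S0_hpart: "S0 hpart"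
proof (rule S0_chordsI)
  show "is_partition hpart"
    by (auto simp: is_partition_def blocks_hpart pts_hpart chord_def pt_at_hpart)
  fix B assume "B \<in> blocks hpart"
  then obtain x :: nat where "x \<in> {0, 1, 2}" "B = chord hpart x (x + 3)"
    unfolding blocks_hpart by blast
  then show "\<exists>x y. x < y \<and> y < npts hpart \<and> B = chord hpart x y \<and>
      ncol hpart (pt_at hpart x) \<noteq> ncol hpart (pt_at hpart y) \<and>
      delta hpart (pt_at hpart x) (pt_at hpart y) = 0 \<and> delta hpart (pt_at hpart y) (pt_at hpart x) = 0"
    by (intro exI[of _ x] exI[of _ "x + 3"]) (auto simp: ncol_hpart delta_hpart pt_at_in_pts)
qed

lemma dd_hpart:
  assumes "B \<in> blocks hpart" "B' \<in> blocks hpart"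
  shows "dd hpart B B' = 0"
proof -
  have "B \<noteq> {}" "B' \<noteq> {}" "B \<subseteq> pts hpart" "B' \<subseteq> pts hpart"
    using assms by (auto simp: blocks_hpart chord_def pt_at_in_pts)
  moreover obtain a b where "a \<in> B" "b \<in> B'" "dd hpart B B' = nat \<bar>delta hpart a b\<bar>"
    using dd_obtain[OF calculation(1,2)] .
  ultimately show ?thesis
    by (simp add: delta_hpart subsetD)
qed

lemma hpart_notin_ID_iff: "hpart \<notin> ID D \<longleftrightarrow> 0 \<in> D"
proof
  assume "hpart \<notin> ID D"
  then show "0 \<in> D"
    using S0_hpart dd_hpart by (auto simp: ID_def)
next
  assume "0 \<in> D"
  moreover have "crosses hpart (chord hpart 0 3) (chord hpart 1 4)"
    by (simp add: crosses_chord_iff interleave_def)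
  ultimately show "hpart \<notin> ID D"
    using dd_hpart by (auto simp: ID_def blocks_hpart)
qed

lemma Br_simps:
  "low (Br w) = 2 * Max w + 2" "up (Br w) = 2 * Max w + 2" "col (Br w) = (\<lambda>x. Max w + 1 \<le> snd x)"
  by (simp_all add: Br_def Let_def)

lemma npts_Br [simp]: "npts (Br w) = 4 * Max w + 4"
  by (simp add: npts_def Br_simps)

lemma pt_at_Br:
  "pt_at (Br w) q = (if q < 2 * Max w + 2 then (False, q) else (True, 4 * Max w + 3 - q))"
  unfolding pt_at_def Br_simps by simp arith

text \<open>With \<open>m = Max w\<close>, the positions of \<open>Br w\<close> in the cyclic order carry
  \<open>b\<^sub>m, ..., b\<^sub>0, c\<^sub>0, ..., c\<^sub>m\<close> (lower row) followed by
  \<open>c'\<^sub>m, ..., c'\<^sub>0, b'\<^sub>0, ..., b'\<^sub>m\<close> (upper row, read backwards);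
  \<open>Br_level m q\<close> is the index \<open>k\<close> of the point at position \<open>q\<close>, and the points
  \<open>c\<^sub>k, b'\<^sub>k\<close> are the normalized white ones.\<close>

definition Br_level :: "nat \<Rightarrow> nat \<Rightarrow> nat" where
  "Br_level m q =
     (if q \<le> m then m - q else if q \<le> 2 * m + 1 then q - m - 1
      else if q \<le> 3 * m + 2 then 3 * m + 2 - q else q - 3 * m - 3)"

definition Br_white :: "nat \<Rightarrow> nat \<Rightarrow> bool" where
  "Br_white m q \<longleftrightarrow> m + 1 \<le> q \<and> q < 2 * m + 2 \<or> 3 * m + 3 \<le> q"

lemma ncol_Br: "q < 4 * Max w + 4 \<Longrightarrow> ncol (Br w) (pt_at (Br w) q) \<longleftrightarrow> Br_white (Max w) q"
  unfolding pt_at_Br ncol_def by (auto simp: Br_white_def Br_simps)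

lemma Br_level_Suc:
  "Suc q < 4 * m + 4 \<Longrightarrow>
    int (Br_level m (Suc q)) - (if Br_white m (Suc q) then 1 else 0) =
    int (Br_level m q) - (if Br_white m q then 0 else 1)"
  by (auto simp: Br_level_def Br_white_def)

lemma height_Br:
  "q < 4 * Max w + 4 \<Longrightarrow>
    height (Br w) q = int (Br_level (Max w) q) - int (Max w) - (if Br_white (Max w) q then 1 else 0)"
proof (induction q)
  case 0
  then show ?case by (simp add: Br_level_def Br_white_def)
next
  case (Suc q)
  then show ?case
    using Br_level_Suc[OF Suc.prems] by (simp add: height_Suc sgn_at_def ncol_Br)
qed

lemma height_Br_Suc:
  "q < 4 * Max w + 4 \<Longrightarrow>
    height (Br w) (Suc q) = int (Br_level (Max w) q) - int (Max w) - (if Br_white (Max w) q then 0 else 1)"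
  by (simp add: height_Suc height_Br sgn_at_def ncol_Br)

lemma height_Br_total: "height (Br w) (4 * Max w + 4) = 0"
  using height_Br_Suc[of "4 * Max w + 3" w] by (simp add: Br_level_def Br_white_def ac_simps)

lemma delta_Br:
  assumes "s < 4 * Max w + 4" "t < 4 * Max w + 4"
  shows "delta (Br w) (pt_at (Br w) s) (pt_at (Br w) t) = int (Br_level (Max w) t) - int (Br_level (Max w) s)"
  using delta_pt_at[of s "Br w" t] assms height_Br_total by (simp add: ncol_Br height_Br height_Br_Suc)

text \<open>The blocks at level \<open>k\<close>: the brackets \<open>{b\<^sub>k, c\<^sub>k}\<close>, \<open>{b'\<^sub>k, c'\<^sub>k}\<close>
  if \<open>k \<in> w\<close>, the through-strings \<open>{b\<^sub>k, b'\<^sub>k}\<close>, \<open>{c\<^sub>k, c'\<^sub>k}\<close> otherwise.\<close>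

definition Br_chord :: "nat \<Rightarrow> nat set \<Rightarrow> nat \<Rightarrow> nat \<Rightarrow> nat \<Rightarrow> bool" where
  "Br_chord m w k x y \<longleftrightarrow> k \<le> m \<and>
     (k \<in> w \<and> (x = m - k \<and> y = m + 1 + k \<or> x = 3 * m + 2 - k \<and> y = 3 * m + 3 + k) \<or>
      k \<notin> w \<and> (x = m - k \<and> y = 3 * m + 3 + k \<or> x = m + 1 + k \<and> y = 3 * m + 2 - k))"

lemma Br_chordD:
  "Br_chord m w k x y \<Longrightarrow>
    x < y \<and> y < 4 * m + 4 \<and> Br_level m x = k \<and> Br_level m y = k \<and> Br_white m x \<noteq> Br_white m y"
  by (auto simp: Br_chord_def Br_level_def Br_white_def)

lemma Br_chord_unique:
  assumes "Br_chord m w k x y" "Br_chord m w j u v" "x = u \<or> x = v \<or> y = u \<or> y = v"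
  shows "x = u \<and> y = v"
proof -
  have "k = j" using Br_chordD[OF assms(1)] Br_chordD[OF assms(2)] assms(3) by auto
  then show ?thesis using assms unfolding Br_chord_def by auto
qed

lemma Br_chord_exists: "q < 4 * m + 4 \<Longrightarrow> \<exists>k x y. Br_chord m w k x y \<and> (q = x \<or> q = y)"
  by (rule exI[of _ "Br_level m q"], cases "Br_level m q \<in> w")
    (auto simp: Br_chord_def Br_level_def)

lemma Br_chord_interleave:
  "Br_chord m w k x y \<Longrightarrow> Br_chord m w j u v \<Longrightarrow> interleave x y u v \<Longrightarrow>
    k \<in> w \<and> j \<notin> w \<and> j < k \<or> j \<in> w \<and> k \<notin> w \<and> k < j"
  by (auto simp: Br_chord_def interleave_def)

lemma chord_Br:
  assumes "k \<le> Max w"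
  shows "chord (Br w) (Max w - k) (Max w + 1 + k) = {(False, Max w - k), (False, Max w + 1 + k)}"
    and "chord (Br w) (3 * Max w + 2 - k) (3 * Max w + 3 + k) = {(True, Max w - k), (True, Max w + 1 + k)}"
    and "chord (Br w) (Max w - k) (3 * Max w + 3 + k) = {(False, Max w - k), (True, Max w - k)}"
    and "chord (Br w) (Max w + 1 + k) (3 * Max w + 2 - k) = {(False, Max w + 1 + k), (True, Max w + 1 + k)}"
  using assms by (auto simp: chord_def pt_at_Br)

lemma blocks_Br_images:
  "blocks (Br w) =
      (\<lambda>k. {(False, Max w - k), (False, Max w + 1 + k)}) ` w \<union>
      (\<lambda>k. {(True, Max w - k), (True, Max w + 1 + k)}) ` w \<union>
      (\<lambda>k. {(False, Max w - k), (True, Max w - k)}) ` {k. k \<le> Max w \<and> k \<notin> w} \<union>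
      (\<lambda>k. {(False, Max w + 1 + k), (True, Max w + 1 + k)}) ` {k. k \<le> Max w \<and> k \<notin> w}"
  unfolding Br_def Let_def Setcompr_eq_image by simp blast

lemma chord_in_blocks_Br:
  assumes "Br_chord (Max w) w k x y"
  shows "chord (Br w) x y \<in> blocks (Br w)"
proof -
  let ?m = "Max w"
  have k: "k \<le> ?m" using assms by (simp add: Br_chord_def)
  from assms consider
      "k \<in> w" "x = ?m - k" "y = ?m + 1 + k"
    | "k \<in> w" "x = 3 * ?m + 2 - k" "y = 3 * ?m + 3 + k"
    | "k \<notin> w" "x = ?m - k" "y = 3 * ?m + 3 + k"
    | "k \<notin> w" "x = ?m + 1 + k" "y = 3 * ?m + 2 - k"
    unfolding Br_chord_def by blast
  then show ?thesis
    unfolding blocks_Br_images using chord_Br[OF k] k by cases blast+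
qed

lemma blocks_BrE:
  assumes "finite w" "B \<in> blocks (Br w)"
  obtains k x y where "Br_chord (Max w) w k x y" "B = chord (Br w) x y"
proof -
  let ?m = "Max w"
  have le: "k \<le> ?m" if "k \<in> w" for k using assms(1) that by simp
  from assms(2) show ?thesis
    unfolding blocks_Br_images
  proof (elim UnE imageE)
    fix k assume k: "k \<in> w" and B: "B = {(False, ?m - k), (False, ?m + 1 + k)}"
    have "Br_chord ?m w k (?m - k) (?m + 1 + k)" using k le by (simp add: Br_chord_def)
    moreover have "B = chord (Br w) (?m - k) (?m + 1 + k)" unfolding B chord_Br[OF le[OF k]] ..
    ultimately show ?thesis by (rule that)
  next
    fix k assume k: "k \<in> w" and B: "B = {(True, ?m - k), (True, ?m + 1 + k)}"
    have "Br_chord ?m w k (3 * ?m + 2 - k) (3 * ?m + 3 + k)" using k le by (simp add: Br_chord_def)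
    moreover have "B = chord (Br w) (3 * ?m + 2 - k) (3 * ?m + 3 + k)" unfolding B chord_Br[OF le[OF k]] ..
    ultimately show ?thesis by (rule that)
  next
    fix k assume "k \<in> {k. k \<le> ?m \<and> k \<notin> w}" and B: "B = {(False, ?m - k), (True, ?m - k)}"
    then have k: "k \<le> ?m" "k \<notin> w" by simp_all
    then have "Br_chord ?m w k (?m - k) (3 * ?m + 3 + k)" by (simp add: Br_chord_def)
    moreover have "B = chord (Br w) (?m - k) (3 * ?m + 3 + k)" unfolding B chord_Br[OF k(1)] ..
    ultimately show ?thesis by (rule that)
  next
    fix k assume "k \<in> {k. k \<le> ?m \<and> k \<notin> w}" and B: "B = {(False, ?m + 1 + k), (True, ?m + 1 + k)}"
    then have k: "k \<le> ?m" "k \<notin> w" by simp_all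
    then have "Br_chord ?m w k (?m + 1 + k) (3 * ?m + 2 - k)" by (simp add: Br_chord_def)
    moreover have "B = chord (Br w) (?m + 1 + k) (3 * ?m + 2 - k)" unfolding B chord_Br[OF k(1)] ..
    ultimately show ?thesis by (rule that)
  qed
qed

lemma dd_Br_chords:
  assumes chord1: "Br_chord (Max w) w k x y" and chord2: "Br_chord (Max w) w j u v"
  shows "dd (Br w) (chord (Br w) x y) (chord (Br w) u v) = nat \<bar>int j - int k\<bar>"
proof -
  obtain a b where "a \<in> chord (Br w) x y" "b \<in> chord (Br w) u v"
    and dd: "dd (Br w) (chord (Br w) x y) (chord (Br w) u v) = nat \<bar>delta (Br w) a b\<bar>"
    by (rule dd_obtain[where B = "chord (Br w) x y" and B' = "chord (Br w) u v" and p = "Br w"])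
      (auto simp: chord_def)
  then obtain s t where st: "s \<in> {x, y}" "t \<in> {u, v}" "a = pt_at (Br w) s" "b = pt_at (Br w) t"
    by (auto simp: chord_def)
  have "s < 4 * Max w + 4" "Br_level (Max w) s = k" "t < 4 * Max w + 4" "Br_level (Max w) t = j"
    using st(1,2) Br_chordD[OF chord1] Br_chordD[OF chord2] by auto
  then show ?thesis
    by (simp add: dd st(3,4) delta_Br)
qed

lemma is_partition_Br:
  assumes "finite w"
  shows "is_partition (Br w)"
proof -
  have blocks_sub: "B \<noteq> {} \<and> B \<subseteq> pts (Br w)" if block: "B \<in> blocks (Br w)" for B
  proof -
    obtain k x y where "Br_chord (Max w) w k x y" "B = chord (Br w) x y"
      using blocks_BrE[OF assms block] .
    then show ?thesis
      using Br_chordD[of "Max w" w k x y] by (simp add: chord_def pt_at_in_pts)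
  qed
  have pts_sub: "pts (Br w) \<subseteq> \<Union> (blocks (Br w))"
  proof
    fix a assume "a \<in> pts (Br w)"
    then obtain q where q: "q < 4 * Max w + 4" "a = pt_at (Br w) q"
      by (auto simp: pts_eq_image_pt_at)
    obtain k x y where chord: "Br_chord (Max w) w k x y" and "q = x \<or> q = y"
      using Br_chord_exists[OF q(1)] by blast
    then have "a \<in> chord (Br w) x y"
      using q(2) by (auto simp: chord_def)
    with chord_in_blocks_Br[OF chord] show "a \<in> \<Union> (blocks (Br w))" by blast
  qed
  have disjoint: "B \<inter> B' = {}"
    if blocks: "B \<in> blocks (Br w)" "B' \<in> blocks (Br w)" and "B \<noteq> B'" for B B'
  proof -
    obtain k x y where chord1: "Br_chord (Max w) w k x y" and B: "B = chord (Br w) x y"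
      using blocks_BrE[OF assms blocks(1)] .
    obtain j u v where chord2: "Br_chord (Max w) w j u v" and B': "B' = chord (Br w) u v"
      using blocks_BrE[OF assms blocks(2)] .
    have "\<not> (x = u \<or> x = v \<or> y = u \<or> y = v)"
      using Br_chord_unique[OF chord1 chord2] \<open>B \<noteq> B'\<close> B B' by blast
    moreover have "x < 4 * Max w + 4" "y < 4 * Max w + 4" "u < 4 * Max w + 4" "v < 4 * Max w + 4"
      using Br_chordD[OF chord1] Br_chordD[OF chord2] by auto
    ultimately show "B \<inter> B' = {}"
      by (simp add: B B' chord_def pt_at_eq_iff)
  qed
  show ?thesis
    unfolding is_partition_def using blocks_sub pts_sub disjoint by blast
qed

lemma S0_Br:
  assumes "finite w"
  shows "S0 (Br w)"
proof (rule S0_chordsI)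
  show "is_partition (Br w)" using assms by (rule is_partition_Br)
  fix B assume "B \<in> blocks (Br w)"
  then obtain k x y where chord: "Br_chord (Max w) w k x y" and B: "B = chord (Br w) x y"
    using assms blocks_BrE by blast
  have "x < y" "y < npts (Br w)"
    "ncol (Br w) (pt_at (Br w) x) \<noteq> ncol (Br w) (pt_at (Br w) y)"
    "delta (Br w) (pt_at (Br w) x) (pt_at (Br w) y) = 0"
    "delta (Br w) (pt_at (Br w) y) (pt_at (Br w) x) = 0"
    using Br_chordD[OF chord] by (simp_all add: ncol_Br delta_Br)
  with B show "\<exists>x y. x < y \<and> y < npts (Br w) \<and> B = chord (Br w) x y \<and>
      ncol (Br w) (pt_at (Br w) x) \<noteq> ncol (Br w) (pt_at (Br w) y) \<and>
      delta (Br w) (pt_at (Br w) x) (pt_at (Br w) y) = 0 \<and>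
      delta (Br w) (pt_at (Br w) y) (pt_at (Br w) x) = 0"
    by blast
qed

lemma crossing_dd_Br:
  assumes "finite w"
  shows "{dd (Br w) B B' | B B'. B \<in> blocks (Br w) \<and> B' \<in> blocks (Br w) \<and> crosses (Br w) B B'} =
    completion w" (is "?dists = _")
proof (intro equalityI subsetI)
  fix d assume "d \<in> ?dists"
  then obtain B B' where blocks: "B \<in> blocks (Br w)" "B' \<in> blocks (Br w)"
    and cross: "crosses (Br w) B B'" and d: "d = dd (Br w) B B'"
    by blast
  obtain k x y where chord1: "Br_chord (Max w) w k x y" and B: "B = chord (Br w) x y"
    using blocks_BrE[OF assms blocks(1)] .
  obtain j u v where chord2: "Br_chord (Max w) w j u v" and B': "B' = chord (Br w) u v"
    using blocks_BrE[OF assms blocks(2)] .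
  have "interleave x y u v"
    using cross Br_chordD[OF chord1] Br_chordD[OF chord2] by (simp add: B B' crosses_chord_iff)
  then have "k \<in> w \<and> j \<notin> w \<and> j < k \<or> j \<in> w \<and> k \<notin> w \<and> k < j"
    using Br_chord_interleave[OF chord1 chord2] by blast
  then show "d \<in> completion w"
    unfolding d B B' dd_Br_chords[OF chord1 chord2] completion_def
    by (auto simp flip: of_nat_diff) blast+
next
  fix d assume "d \<in> completion w"
  then obtain k j where kj: "k \<in> w" "j \<notin> w" "j < k" "d = k - j"
    unfolding completion_def by blast
  let ?m = "Max w"
  have "k \<le> ?m" using assms kj(1) by simp
  then have chord1: "Br_chord ?m w k (?m - k) (?m + 1 + k)"
    and chord2: "Br_chord ?m w j (?m - j) (3 * ?m + 3 + j)"
    using kj by (auto simp: Br_chord_def)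
  \<comment> \<open>the lower bracket \<open>{b\<^sub>k, c\<^sub>k}\<close> crosses the through-string \<open>{b\<^sub>j, b'\<^sub>j}\<close>\<close>
  let ?B = "chord (Br w) (?m - k) (?m + 1 + k)" and ?B' = "chord (Br w) (?m - j) (3 * ?m + 3 + j)"
  have "?B \<in> blocks (Br w)" "?B' \<in> blocks (Br w)"
    using chord1 chord2 by (auto intro: chord_in_blocks_Br)
  moreover have "crosses (Br w) ?B ?B'"
    using \<open>k \<le> ?m\<close> kj by (simp add: crosses_chord_iff interleave_def) linarith
  moreover have "dd (Br w) ?B ?B' = d"
    unfolding dd_Br_chords[OF chord1 chord2] using kj by simp
  ultimately show "d \<in> ?dists" by blast
qed

lemma Br_in_ID_iff:
  assumes "finite w"
  shows "Br w \<in> ID D \<longleftrightarrow> completion w \<inter> D = {}"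
proof -
  have "Br w \<in> ID D \<longleftrightarrow>
      {dd (Br w) B B' | B B'. B \<in> blocks (Br w) \<and> B' \<in> blocks (Br w) \<and> crosses (Br w) B B'} \<inter> D = {}"
    using S0_Br[OF assms] unfolding ID_def by blast
  then show ?thesis
    by (simp only: crossing_dd_Br[OF assms])
qed

lemma zero_notin_completion: "0 \<notin> completion w"
  by (auto simp: completion_def)

lemma bracket_patterns_in_ID: "{w. bracket_pattern w \<and> Br w \<in> ID D} = WM (D \<union> {0})"
  using Br_in_ID_iff zero_notin_completion by (auto simp: WM_def bracket_pattern_def)

theorem lemma8p1:
  fixes D :: "nat set"
  assumes "subsemigroup D"
  shows "(hpart \<notin> ID D \<longleftrightarrow> 0 \<in> D)
         \<and> {w. bracket_pattern w \<and> Br w \<in> ID D} = WM (D \<union> {0})"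
  using hpart_notin_ID_iff bracket_patterns_in_ID by blast

end
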